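(* Let $\tau>3$. For Lebesgue-almost every $\gamma\in(0,\tfrac12)$ the following holds. Let $\alpha\in D_{\gamma,\tau}$ with partial quotients $a_1,a_2,\dots$ and convergents $p_n/q_n$, and suppose that for infinitely many even $n$, $$\frac{p_n}{q_n}+\frac{\gamma}{q_n^{\tau+1}}>\frac{p_{n+2}}{q_{n+2}}-\frac{\gamma}{q_{n+2}^{\tau+1}}.$$ Then for every $\varepsilon>0$ (arbitrarily small) there exists $C>0$ such that $a_{n+2}\le C\,q_n^{2+\varepsilon}$ for these $n$.
   Context: For $x\in\mathbb{R}$, $\|x\|:=\min_{p\in\mathbb{Z}}|x-p|$; $\mathbb{N}=\{1,2,\dots\}$. For $\gamma>0,\tau\ge1$, $D_{\gamma,\tau}:=\{\alpha\in(0,1): \|q\alpha\|\ge\gamma/q^\tau\ \forall q\in\mathbb{N}\}$; its elements are irrational. For irrational $\alpha\in(0,1)$ write $\alpha=\cfrac{1}{a_1+\cfrac{1}{a_2+\cdots}}$ (partial quotients $a_n\in\mathbb{N}$), and let $p_n/q_n$ ($n\ge0$) be its convergents: $p_{-1}=1,q_{-1}=0,p_0=0,q_0=1$, $p_n=a_np_{n-1}+p_{n-2}$, $q_n=a_nq_{n-1}+q_{n-2}$. *)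

theory Defs
  imports "HOL-Analysis.Analysis"
begin

definition dist_int :: "real \<Rightarrow> real" where
  "dist_int x = Inf (range (\<lambda>p::int. \<bar>x - of_int p\<bar>))"

definition Dset :: "real \<Rightarrow> real \<Rightarrow> real set" where
  "Dset \<gamma> \<tau> = {\<alpha>. 0 < \<alpha> \<and> \<alpha> < 1 \<and>
      (\<forall>q::nat. q \<ge> 1 \<longrightarrow> dist_int (real q * \<alpha>) \<ge> \<gamma> / real q powr \<tau>)}"

fun cf_rem :: "real \<Rightarrow> nat \<Rightarrow> real" where
  "cf_rem \<alpha> 0 = \<alpha>"
| "cf_rem \<alpha> (Suc n) = frac (1 / cf_rem \<alpha> n)"

text \<open>Partial quotients a_n (n >= 1): a_{n+1} = floor(1/x_n).  (a_0 is irrelevant.)\<close>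
definition cf_a :: "real \<Rightarrow> nat \<Rightarrow> nat" where
  "cf_a \<alpha> n = nat \<lfloor>1 / cf_rem \<alpha> (n - 1)\<rfloor>"

text \<open>Shifted convergent sequences: cf_P alpha k = p_{k-1}, cf_Q alpha k = q_{k-1}.\<close>
fun cf_P :: "real \<Rightarrow> nat \<Rightarrow> int" where
  "cf_P \<alpha> 0 = 1"
| "cf_P \<alpha> (Suc 0) = 0"
| "cf_P \<alpha> (Suc (Suc n)) = int (cf_a \<alpha> (Suc n)) * cf_P \<alpha> (Suc n) + cf_P \<alpha> n"

fun cf_Q :: "real \<Rightarrow> nat \<Rightarrow> int" where
  "cf_Q \<alpha> 0 = 0"
| "cf_Q \<alpha> (Suc 0) = 1"
| "cf_Q \<alpha> (Suc (Suc n)) = int (cf_a \<alpha> (Suc n)) * cf_Q \<alpha> (Suc n) + cf_Q \<alpha> n"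

definition cf_p :: "real \<Rightarrow> nat \<Rightarrow> int" where "cf_p \<alpha> n = cf_P \<alpha> (Suc n)"
definition cf_q :: "real \<Rightarrow> nat \<Rightarrow> int" where "cf_q \<alpha> n = cf_Q \<alpha> (Suc n)"

end

theory Submission
  imports Defs
begin

text \<open>
  Fix e > 0 and 0 < delta <= 1/2. If |q^tau - gamma m| < c q^-(1+e) for some gamma in [delta, 1/2],
  then m is comparable to q^tau and gamma lies within c / (m q^(1+e)) of q^tau / m. For fixed q these
  intervals have total length O(c q^-(1+e) / delta), which is summable in q, so the exceptional gammas
  are covered by sets of measure O(c) for every c > 0. Hence almost every gamma satisfies
  |q^tau - gamma m| >= c q^-(1+e) for some c > 0 and all q >= 1 and m.

  Now let n be even and let the intervals of radius gamma / q^(tau+1) around p_n/q_n and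
  p_(n+2)/q_(n+2) overlap. As p_(n+2)/q_(n+2) - p_n/q_n = a_(n+2) / (q_n q_(n+2)) and
  q_(n+2) = a_(n+2) q_(n+1) + q_n, the overlap gives a_(n+2) (q_n^tau - gamma q_(n+1)) < 2 gamma q_n.
  The Diophantine condition gamma / q_n^tau <= |q_n alpha - p_n| <= 1 / q_(n+1) makes the bracket
  nonnegative, and for generic gamma it is at least c q_n^-(1+e), so a_(n+2) < (2 gamma / c) q_n^(2+e).
\<close>

section \<open>Powers q^tau avoiding the multiples of a generic gamma\<close>

lemma near_multiple_in_interval:
  fixes x r \<gamma> \<delta> :: real and m :: nat
  assumes x: "x \<ge> 1" and r: "r \<le> 1/2" and \<gamma>: "\<delta> \<le> \<gamma>" "\<gamma> \<le> 1/2"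
    and near: "\<bar>x - \<gamma> * real m\<bar> < r"
  shows "x \<le> real m" and "\<delta> * real m \<le> 2 * x"
    and "\<gamma> \<in> {(x - r) / real m <..< (x + r) / real m}"
proof -
  have lo: "x - r < \<gamma> * real m" and hi: "\<gamma> * real m < x + r" using near by auto
  then have "\<gamma> * real m > 0" using x r by linarith
  then have "real m > 0" by (cases "m = 0") auto
  show "x \<le> real m"
    using lo x r \<gamma>(2) \<open>real m > 0\<close> mult_right_mono[OF \<gamma>(2), of "real m"] by linarith
  show "\<delta> * real m \<le> 2 * x"
    using hi x r mult_right_mono[OF \<gamma>(1), of "real m"] by linarith
  show "\<gamma> \<in> {(x - r) / real m <..< (x + r) / real m}"
    using lo hi \<open>real m > 0\<close> by (simp add: field_simps)
qed

lemma emeasure_near_multiples_le: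
  fixes x r \<delta> :: real
  assumes x: "x \<ge> 1" and r: "r \<ge> 0" and \<delta>: "\<delta> > 0"
  shows "emeasure lborel (\<Union>m\<in>{m::nat. x \<le> real m \<and> \<delta> * real m \<le> 2 * x}.
           {(x - r) / real m <..< (x + r) / real m}) \<le> ennreal (4 * r / \<delta>)"
proof -
  define M where "M = {m::nat. x \<le> real m \<and> \<delta> * real m \<le> 2 * x}"
  have M_sub: "M \<subseteq> {1..nat \<lfloor>2 * x / \<delta>\<rfloor>}"
  proof
    fix m assume "m \<in> M"
    then have "x \<le> real m" "real m \<le> 2 * x / \<delta>" using \<delta> by (auto simp: M_def field_simps)
    then show "m \<in> {1..nat \<lfloor>2 * x / \<delta>\<rfloor>}" using x by (auto simp: le_nat_iff le_floor_iff)
  qed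
  then have "finite M" by (rule finite_subset) simp
  have card_M: "real (card M) \<le> 2 * x / \<delta>"
  proof -
    have "real (card M) \<le> real (nat \<lfloor>2 * x / \<delta>\<rfloor>)" using card_mono[OF _ M_sub] by simp
    also have "\<dots> \<le> 2 * x / \<delta>" using x \<delta> by (simp add: of_nat_nat)
    finally show ?thesis .
  qed
  have "emeasure lborel (\<Union>m\<in>M. {(x - r) / real m <..< (x + r) / real m})
      \<le> (\<Sum>m\<in>M. emeasure lborel {(x - r) / real m <..< (x + r) / real m})"
    by (rule emeasure_subadditive_finite) (auto simp: \<open>finite M\<close>)
  also have "\<dots> = (\<Sum>m\<in>M. ennreal (2 * r / real m))"
  proof (rule sum.cong)
    fix m assume "m \<in> M"
    have "(x - r) / real m \<le> (x + r) / real m" using r by (simp add: divide_right_mono)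
    then show "emeasure lborel {(x - r) / real m <..< (x + r) / real m} = ennreal (2 * r / real m)"
      by (simp add: diff_divide_distrib add_divide_distrib)
  qed simp
  also have "\<dots> = ennreal (\<Sum>m\<in>M. 2 * r / real m)" using r by simp
  also have "\<dots> \<le> ennreal (4 * r / \<delta>)"
  proof (rule ennreal_leI)
    have "(\<Sum>m\<in>M. 2 * r / real m) \<le> (\<Sum>m\<in>M. 2 * r / x)"
      using x r by (intro sum_mono divide_left_mono) (auto simp: M_def)
    also have "\<dots> = real (card M) * (2 * r / x)" by simp
    also have "\<dots> \<le> (2 * x / \<delta>) * (2 * r / x)"
      using card_M x r by (intro mult_right_mono) auto
    also have "\<dots> = 4 * r / \<delta>" using x by (simp add: field_simps)
    finally show "(\<Sum>m\<in>M. 2 * r / real m) \<le> 4 * r / \<delta>" .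
  qed
  finally show ?thesis by (simp add: M_def)
qed

definition powers_avoid_multiples :: "real \<Rightarrow> real \<Rightarrow> real \<Rightarrow> real \<Rightarrow> bool" where
  "powers_avoid_multiples \<tau> \<gamma> e c \<longleftrightarrow>
     (\<forall>q::nat. q \<ge> 1 \<longrightarrow> (\<forall>m::nat. c / real q powr (1 + e) \<le> \<bar>real q powr \<tau> - \<gamma> * real m\<bar>))"

lemma powers_avoid_multiples_mono:
  assumes "powers_avoid_multiples \<tau> \<gamma> e c" and "e \<le> e'" and "c \<ge> 0"
  shows "powers_avoid_multiples \<tau> \<gamma> e' c"
proof -
  have "c / real q powr (1 + e') \<le> c / real q powr (1 + e)" if "q \<ge> 1" for q :: nat
    using that assms(2,3) by (intro divide_left_mono powr_mono mult_pos_pos) auto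
  with assms(1) show ?thesis unfolding powers_avoid_multiples_def by (meson order_trans)
qed

lemma AE_powers_avoid_multiples_on:
  fixes \<tau> e \<delta> :: real
  assumes \<tau>: "\<tau> \<ge> 0" and e: "e > 0" and \<delta>: "\<delta> > 0"
  shows "AE \<gamma> in lborel. \<delta> \<le> \<gamma> \<and> \<gamma> \<le> 1/2 \<longrightarrow> (\<exists>c>0. powers_avoid_multiples \<tau> \<gamma> e c)"
proof -
  define r where "r c q = c / real q powr (1 + e)" for c :: real and q :: nat
  define M where "M x = {m::nat. x \<le> real m \<and> \<delta> * real m \<le> 2 * x}" for x :: real
  define B where "B c q = (\<Union>m\<in>M (real q powr \<tau>).
      {(real q powr \<tau> - r c q) / real m <..< (real q powr \<tau> + r c q) / real m})" for c q
  define U where "U c = (\<Union>q. B c (Suc q))" for c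
  define Z where "Z = (\<Sum>q. 1 / real (Suc q) powr (1 + e))"
  have summable: "summable (\<lambda>q. 1 / real (Suc q) powr (1 + e))"
  proof -
    have "summable (\<lambda>q. real q powr (- (1 + e)))" using e by (simp add: summable_real_powr_iff)
    then have "summable (\<lambda>q. real (Suc q) powr (- (1 + e)))"
      by (rule summable_ignore_initial_segment[of _ 1, simplified])
    then show ?thesis unfolding powr_minus_divide .
  qed
  have emeasure_U: "emeasure lborel (U c) \<le> ennreal (4 * c / \<delta> * Z)" if "c > 0" for c
  proof -
    have "emeasure lborel (U c) \<le> (\<Sum>q. emeasure lborel (B c (Suc q)))"
      unfolding U_def by (rule emeasure_subadditive_countably) (auto simp: B_def)
    also have "\<dots> \<le> (\<Sum>q. ennreal (4 * c / \<delta> * (1 / real (Suc q) powr (1 + e))))"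
    proof (rule suminf_le)
      fix q
      have "emeasure lborel (B c (Suc q)) \<le> ennreal (4 * r c (Suc q) / \<delta>)"
        unfolding B_def M_def using \<tau> \<delta> that
        by (intro emeasure_near_multiples_le) (auto simp: r_def ge_one_powr_ge_zero)
      then show "emeasure lborel (B c (Suc q)) \<le> ennreal (4 * c / \<delta> * (1 / real (Suc q) powr (1 + e)))"
        by (simp add: r_def mult.commute)
    qed auto
    also have "\<dots> = ennreal (\<Sum>q. 4 * c / \<delta> * (1 / real (Suc q) powr (1 + e)))"
      using that \<delta> summable_mult[OF summable, of "4 * c / \<delta>"] by (intro suminf_ennreal2) auto
    also have "\<dots> = ennreal (4 * c / \<delta> * Z)"
      unfolding Z_def by (subst suminf_mult[OF summable]) (rule refl)
    finally show ?thesis .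
  qed
  define N where "N = (\<Inter>k::nat. U (1 / (real k + 2)))"
  have "N \<in> null_sets lborel"
  proof -
    have "N \<in> sets lborel" unfolding N_def U_def B_def by measurable
    moreover have "emeasure lborel N \<le> 0"
    proof (rule ennreal_le_epsilon)
      fix \<epsilon> :: real assume "0 < \<epsilon>"
      obtain k :: nat where k: "4 * Z / (\<delta> * \<epsilon>) < real k" using reals_Archimedean2 by blast
      have "emeasure lborel N \<le> emeasure lborel (U (1 / (real k + 2)))"
        unfolding N_def by (rule emeasure_mono) (auto simp: U_def B_def)
      also have "\<dots> \<le> ennreal (4 * (1 / (real k + 2)) / \<delta> * Z)" by (rule emeasure_U) simp
      also have "\<dots> \<le> ennreal \<epsilon>"
      proof (rule ennreal_leI)
        have "4 * Z < real k * (\<delta> * \<epsilon>)" using k \<delta> \<open>0 < \<epsilon>\<close> by (simp add: field_simps)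
        also have "\<dots> \<le> \<epsilon> * ((real k + 2) * \<delta>)" using \<delta> \<open>0 < \<epsilon>\<close> by (simp add: algebra_simps)
        finally have "4 * Z / ((real k + 2) * \<delta>) \<le> \<epsilon>" using \<delta> by (simp add: pos_divide_le_eq)
        then show "4 * (1 / (real k + 2)) / \<delta> * Z \<le> \<epsilon>" by simp
      qed
      finally show "emeasure lborel N \<le> 0 + ennreal \<epsilon>" by simp
    qed
    ultimately show ?thesis by auto
  qed
  from AE_not_in[OF this] show ?thesis
  proof (rule eventually_mono, intro impI, elim conjE)
    fix \<gamma> assume "\<gamma> \<notin> N" and \<gamma>: "\<delta> \<le> \<gamma>" "\<gamma> \<le> 1/2"
    show "\<exists>c>0. powers_avoid_multiples \<tau> \<gamma> e c"
    proof (rule ccontr)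
      assume avoid_fails: "\<not> ?thesis"
      have "\<gamma> \<in> U (1 / (real k + 2))" for k :: nat
      proof -
        define c where "c = 1 / (real k + 2)"
        have "c > 0" "c \<le> 1/2" by (auto simp: c_def field_simps)
        then obtain q m where "q \<ge> 1" and near: "\<bar>real q powr \<tau> - \<gamma> * real m\<bar> < r c q"
          using avoid_fails by (auto simp: powers_avoid_multiples_def r_def not_le)
        have "real q powr \<tau> \<ge> 1" using \<open>q \<ge> 1\<close> \<tau> by (simp add: ge_one_powr_ge_zero)
        have "r c q \<le> c"
          using \<open>q \<ge> 1\<close> e \<open>c > 0\<close> by (simp add: r_def divide_le_eq ge_one_powr_ge_zero)
        then have "\<gamma> \<in> B c q"
          using near_multiple_in_interval[OF \<open>real q powr \<tau> \<ge> 1\<close> _ \<gamma> near] \<open>c \<le> 1/2\<close>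
          unfolding B_def M_def by auto
        then show ?thesis
          unfolding U_def c_def[symmetric] using \<open>q \<ge> 1\<close> by (auto intro!: exI[of _ "q - 1"])
      qed
      with \<open>\<gamma> \<notin> N\<close> show False unfolding N_def by blast
    qed
  qed
qed

lemma AE_powers_avoid_multiples:
  fixes \<tau> :: real
  assumes "\<tau> \<ge> 0"
  shows "AE \<gamma> in lborel. 0 < \<gamma> \<and> \<gamma> \<le> 1/2 \<longrightarrow> (\<forall>e>0. \<exists>c>0. powers_avoid_multiples \<tau> \<gamma> e c)"
proof -
  have "AE \<gamma> in lborel. \<forall>j k::nat. 1 / Suc j \<le> \<gamma> \<and> \<gamma> \<le> 1/2 \<longrightarrow>
      (\<exists>c>0. powers_avoid_multiples \<tau> \<gamma> (1 / Suc k) c)"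
    unfolding AE_all_countable by (intro allI AE_powers_avoid_multiples_on[OF assms]) simp_all
  then show ?thesis
  proof (rule eventually_mono, safe)
    fix \<gamma> e :: real assume "0 < \<gamma>" "\<gamma> \<le> 1/2" "0 < e"
      and avoid: "\<forall>j k::nat. 1 / Suc j \<le> \<gamma> \<and> \<gamma> \<le> 1/2 \<longrightarrow>
        (\<exists>c>0. powers_avoid_multiples \<tau> \<gamma> (1 / Suc k) c)"
    obtain j k :: nat where "1 / Suc j < \<gamma>" "1 / Suc k < e"
      using \<open>0 < \<gamma>\<close> \<open>0 < e\<close> by (metis inverse_eq_divide of_nat_Suc reals_Archimedean)
    with avoid \<open>\<gamma> \<le> 1/2\<close> obtain c where "c > 0" "powers_avoid_multiples \<tau> \<gamma> (1 / Suc k) c"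
      by (meson less_imp_le)
    then show "\<exists>c>0. powers_avoid_multiples \<tau> \<gamma> e c"
      using \<open>1 / Suc k < e\<close> by (meson less_imp_le powers_avoid_multiples_mono)
  qed
qed

section \<open>Continued fractions\<close>

lemma cf_P_cf_Q_det: "cf_P \<alpha> (Suc n) * cf_Q \<alpha> n - cf_P \<alpha> n * cf_Q \<alpha> (Suc n) = (-1) ^ Suc n"
  by (induction n) (simp_all add: algebra_simps)

lemma cf_p_cf_q_det2:
  "cf_p \<alpha> (n + 2) * cf_q \<alpha> n - cf_p \<alpha> n * cf_q \<alpha> (n + 2) = (-1) ^ n * int (cf_a \<alpha> (n + 2))"
proof -
  have "cf_p \<alpha> (n + 2) * cf_q \<alpha> n - cf_p \<alpha> n * cf_q \<alpha> (n + 2)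
      = int (cf_a \<alpha> (n + 2)) * (cf_P \<alpha> (Suc (Suc n)) * cf_Q \<alpha> (Suc n) - cf_P \<alpha> (Suc n) * cf_Q \<alpha> (Suc (Suc n)))"
    by (simp add: cf_p_def cf_q_def numeral_2_eq_2 algebra_simps)
  then show ?thesis using cf_P_cf_Q_det[of \<alpha> "Suc n"] by simp
qed

context
  fixes \<alpha> :: real
  assumes irrational: "\<alpha> \<notin> \<rat>" and pos: "0 < \<alpha>" and less_1: "\<alpha> < 1"
begin

lemma cf_rem_not_rat: "cf_rem \<alpha> n \<notin> \<rat>"
proof (induction n)
  case 0
  show ?case using irrational by simp
next
  case (Suc n)
  have "1 / cf_rem \<alpha> n \<notin> \<rat>"
    using Suc Rats_divide[OF Rats_1, of "1 / cf_rem \<alpha> n"] by auto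
  then show ?case
    using Rats_add[OF _ Rats_of_int, of "cf_rem \<alpha> (Suc n)" "\<lfloor>1 / cf_rem \<alpha> n\<rfloor>"]
    by (auto simp: frac_def)
qed

lemma cf_rem_pos: "0 < cf_rem \<alpha> n" and cf_rem_less_1: "cf_rem \<alpha> n < 1"
proof -
  have "0 < cf_rem \<alpha> n \<and> cf_rem \<alpha> n < 1"
  proof (cases n)
    case 0
    then show ?thesis using pos less_1 by simp
  next
    case (Suc m)
    then show ?thesis
      using cf_rem_not_rat[of n] frac_ge_0 frac_lt_1 by (metis cf_rem.simps(2) less_eq_real_def Rats_0)
  qed
  then show "0 < cf_rem \<alpha> n" "cf_rem \<alpha> n < 1" by auto
qed

lemma of_nat_cf_a: "real (cf_a \<alpha> (Suc n)) = of_int \<lfloor>1 / cf_rem \<alpha> n\<rfloor>"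
  using cf_rem_pos[of n] by (simp add: cf_a_def)

lemma cf_a_ge_1: "cf_a \<alpha> (Suc n) \<ge> 1"
proof -
  have "1 \<le> 1 / cf_rem \<alpha> n" using cf_rem_pos[of n] cf_rem_less_1[of n] by simp
  then have "1 \<le> real (cf_a \<alpha> (Suc n))" unfolding of_nat_cf_a by (simp add: le_floor_iff)
  then show ?thesis by simp
qed

lemma inverse_cf_rem: "1 / cf_rem \<alpha> n = real (cf_a \<alpha> (Suc n)) + cf_rem \<alpha> (Suc n)"
  by (simp add: of_nat_cf_a frac_def)

lemma cf_Q_nonneg_Suc_ge_1: "0 \<le> cf_Q \<alpha> n \<and> 1 \<le> cf_Q \<alpha> (Suc n)"
proof (induction n)
  case (Suc n)
  then have "1 \<le> int (cf_a \<alpha> (Suc n)) * cf_Q \<alpha> (Suc n)"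
    using cf_a_ge_1[of n] by (metis mult_mono' mult_1 of_nat_le_iff of_nat_1 zero_le_one)
  then show ?case using Suc by simp
qed simp

lemma cf_q_ge_1: "cf_q \<alpha> n \<ge> 1"
  using cf_Q_nonneg_Suc_ge_1 by (simp add: cf_q_def)

lemma cf_rem_repr:
  "\<alpha> * (of_int (cf_Q \<alpha> (Suc n)) + cf_rem \<alpha> n * of_int (cf_Q \<alpha> n))
     = of_int (cf_P \<alpha> (Suc n)) + cf_rem \<alpha> n * of_int (cf_P \<alpha> n)"
proof (induction n)
  case (Suc n)
  define x y a where "x = cf_rem \<alpha> n" and "y = cf_rem \<alpha> (Suc n)" and "a = real (cf_a \<alpha> (Suc n))"
  have xy: "x * (a + y) = 1"
    using inverse_cf_rem[of n] cf_rem_pos[of n] by (simp add: x_def y_def a_def field_simps)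
  have "\<alpha> * ((a * cf_Q \<alpha> (Suc n) + cf_Q \<alpha> n) + y * cf_Q \<alpha> (Suc n))
      = \<alpha> * (cf_Q \<alpha> (Suc n) * (a + y) + cf_Q \<alpha> n * (x * (a + y)))"
    using xy by (simp add: algebra_simps)
  also have "\<dots> = (\<alpha> * (cf_Q \<alpha> (Suc n) + x * cf_Q \<alpha> n)) * (a + y)"
    by (simp add: algebra_simps)
  also have "\<dots> = (cf_P \<alpha> (Suc n) + x * cf_P \<alpha> n) * (a + y)"
    using Suc.IH by (simp add: x_def)
  also have "\<dots> = cf_P \<alpha> (Suc n) * (a + y) + cf_P \<alpha> n * (x * (a + y))"
    by (simp add: algebra_simps)
  also have "\<dots> = (a * cf_P \<alpha> (Suc n) + cf_P \<alpha> n) + y * cf_P \<alpha> (Suc n)"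
    using xy by (simp add: algebra_simps)
  finally show ?case by (simp add: a_def y_def)
qed simp

lemma cf_approx_error_eq:
  "\<bar>of_int (cf_Q \<alpha> (Suc n)) * \<alpha> - of_int (cf_P \<alpha> (Suc n))\<bar>
     = cf_rem \<alpha> n / (of_int (cf_Q \<alpha> (Suc n)) + cf_rem \<alpha> n * of_int (cf_Q \<alpha> n))"
proof -
  define x where "x = cf_rem \<alpha> n"
  define Q0 Q1 P0 P1 where "Q0 = real_of_int (cf_Q \<alpha> n)" and "Q1 = real_of_int (cf_Q \<alpha> (Suc n))"
    and "P0 = real_of_int (cf_P \<alpha> n)" and "P1 = real_of_int (cf_P \<alpha> (Suc n))"
  define D where "D = Q1 + x * Q0"
  have "x > 0" using cf_rem_pos by (simp add: x_def)
  moreover have "0 \<le> Q0" "1 \<le> Q1" using cf_Q_nonneg_Suc_ge_1[of n] by (auto simp: Q0_def Q1_def)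
  ultimately have "D > 0" by (simp add: D_def add_pos_nonneg)
  have det: "\<bar>P1 * Q0 - P0 * Q1\<bar> = 1"
    using arg_cong[OF cf_P_cf_Q_det[of \<alpha> n], of real_of_int] by (simp add: P0_def P1_def Q0_def Q1_def)
  have "\<alpha> * D = P1 + x * P0"
    using cf_rem_repr[of n] by (simp add: D_def x_def Q0_def Q1_def P0_def P1_def)
  have "(Q1 * \<alpha> - P1) * D = Q1 * (\<alpha> * D) - P1 * D" by (simp add: algebra_simps)
  also have "\<dots> = Q1 * (P1 + x * P0) - P1 * (Q1 + x * Q0)"
    using \<open>\<alpha> * D = P1 + x * P0\<close> by (simp add: D_def)
  also have "\<dots> = - x * (P1 * Q0 - P0 * Q1)" by (simp add: algebra_simps)
  finally have "\<bar>(Q1 * \<alpha> - P1) * D\<bar> = x"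
    using \<open>x > 0\<close> det by (simp add: abs_mult)
  then have "\<bar>Q1 * \<alpha> - P1\<bar> = x / D"
    using \<open>D > 0\<close> by (simp add: abs_mult eq_divide_eq)
  then show ?thesis by (simp add: D_def x_def Q0_def Q1_def P1_def)
qed

lemma cf_approx_error: "\<bar>of_int (cf_q \<alpha> n) * \<alpha> - of_int (cf_p \<alpha> n)\<bar> \<le> 1 / of_int (cf_q \<alpha> (Suc n))"
proof -
  define x a Q0 Q1 Q2 where "x = cf_rem \<alpha> n" and "a = real (cf_a \<alpha> (Suc n))"
    and "Q0 = real_of_int (cf_Q \<alpha> n)" and "Q1 = real_of_int (cf_Q \<alpha> (Suc n))"
    and "Q2 = real_of_int (cf_Q \<alpha> (Suc (Suc n)))"
  have "x > 0" using cf_rem_pos by (simp add: x_def)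
  have Q: "0 \<le> Q0" "1 \<le> Q1" "1 \<le> Q2"
    using cf_Q_nonneg_Suc_ge_1[of n] cf_Q_nonneg_Suc_ge_1[of "Suc n"]
    by (auto simp: Q0_def Q1_def Q2_def simp del: cf_Q.simps)
  have "a \<le> 1 / x" unfolding a_def of_nat_cf_a x_def by (rule of_int_floor_le)
  then have "(a * x) * Q1 \<le> Q1" using \<open>x > 0\<close> Q by (simp add: mult_left_le_one_le field_simps)
  then have "x * Q2 \<le> Q1 + x * Q0" by (simp add: a_def Q2_def Q0_def Q1_def algebra_simps)
  then have "x / (Q1 + x * Q0) \<le> 1 / Q2"
    using \<open>x > 0\<close> Q by (simp add: field_simps add_pos_nonneg)
  then show ?thesis
    using cf_approx_error_eq[of n] by (simp add: cf_q_def cf_p_def x_def Q0_def Q1_def Q2_def)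
qed

end

section \<open>Partial quotients at overlapping convergent intervals\<close>

lemma dist_int_le: "dist_int x \<le> \<bar>x - of_int p\<bar>"
  unfolding dist_int_def by (rule cInf_lower) (auto intro: bdd_belowI[of _ 0])

lemma Dset_not_rat:
  assumes "\<alpha> \<in> Dset \<gamma> \<tau>" and "\<gamma> > 0"
  shows "\<alpha> \<notin> \<rat>"
proof
  assume "\<alpha> \<in> \<rat>"
  then obtain a b where "b > 0" and \<alpha>: "\<alpha> = of_int a / of_int b" by (metis Rats_cases')
  define q where "q = nat b"
  have "q \<ge> 1" and q: "real q * \<alpha> = of_int a" using \<open>b > 0\<close> \<alpha> by (auto simp: q_def)
  then have "\<gamma> / real q powr \<tau> \<le> dist_int (real q * \<alpha>)"
    using assms(1) unfolding Dset_def by blast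
  also have "\<dots> \<le> 0" using dist_int_le[of "of_int a" a] q by simp
  moreover have "\<gamma> / real q powr \<tau> > 0" using \<open>q \<ge> 1\<close> \<open>\<gamma> > 0\<close> by simp
  ultimately show False by linarith
qed

lemma gap_bound_of_overlap:
  fixes q0 q1 q2 a \<gamma> \<tau> :: real
  assumes q0: "q0 \<ge> 1" and q1: "q1 \<ge> 1" and a: "a \<ge> 0" and q2: "q2 = a * q1 + q0"
    and \<tau>: "\<tau> \<ge> 0" and \<gamma>: "\<gamma> \<ge> 0"
    and overlap: "a / (q0 * q2) < \<gamma> / q0 powr (\<tau> + 1) + \<gamma> / q2 powr (\<tau> + 1)"
  shows "a * (q0 powr \<tau> - \<gamma> * q1) < 2 * \<gamma> * q0"
proof -
  have "q2 \<ge> q0" using q2 a q1 by simp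
  then have "q0 powr \<tau> \<le> q2 powr \<tau>" using q0 \<tau> by (intro powr_mono2) auto
  have "a < (\<gamma> / q0 powr (\<tau> + 1) + \<gamma> / q2 powr (\<tau> + 1)) * (q0 * q2)"
    using overlap q0 \<open>q2 \<ge> q0\<close> by (simp add: divide_less_eq)
  also have "\<dots> = \<gamma> * q2 / q0 powr \<tau> + \<gamma> * q0 / q2 powr \<tau>"
    using q0 \<open>q2 \<ge> q0\<close> by (simp add: powr_add field_simps)
  also have "\<gamma> * q0 / q2 powr \<tau> \<le> \<gamma> * q0 / q0 powr \<tau>"
    using \<open>q0 powr \<tau> \<le> q2 powr \<tau>\<close> \<open>q2 \<ge> q0\<close> \<gamma> q0 by (intro divide_left_mono) auto
  finally have "a * q0 powr \<tau> < \<gamma> * q2 + \<gamma> * q0"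
    using q0 by (simp add: field_simps)
  then show ?thesis unfolding q2 by (simp add: algebra_simps)
qed

definition overlap_indices :: "real \<Rightarrow> real \<Rightarrow> real \<Rightarrow> nat set" where
  "overlap_indices \<tau> \<gamma> \<alpha> = {n::nat. even n \<and>
      real_of_int (cf_p \<alpha> n) / real_of_int (cf_q \<alpha> n)
        + \<gamma> / real_of_int (cf_q \<alpha> n) powr (\<tau> + 1)
      > real_of_int (cf_p \<alpha> (n + 2)) / real_of_int (cf_q \<alpha> (n + 2))
        - \<gamma> / real_of_int (cf_q \<alpha> (n + 2)) powr (\<tau> + 1)}"

lemma cf_a_bound_of_overlap:
  fixes \<tau> \<gamma> \<alpha> c e :: real
  assumes \<tau>: "\<tau> \<ge> 0" and \<gamma>: "\<gamma> > 0" and \<alpha>: "\<alpha> \<in> Dset \<gamma> \<tau>"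
    and avoid: "powers_avoid_multiples \<tau> \<gamma> e c" and n: "n \<in> overlap_indices \<tau> \<gamma> \<alpha>"
  shows "c * real (cf_a \<alpha> (n + 2)) < 2 * \<gamma> * real_of_int (cf_q \<alpha> n) powr (2 + e)"
proof -
  have "\<alpha> \<notin> \<rat>" "0 < \<alpha>" "\<alpha> < 1" using Dset_not_rat[OF \<alpha> \<gamma>] \<alpha> by (auto simp: Dset_def)
  note cf = this
  define q0 q1 q2 p0 p2 a where "q0 = real_of_int (cf_q \<alpha> n)" and "q1 = real_of_int (cf_q \<alpha> (n + 1))"
    and "q2 = real_of_int (cf_q \<alpha> (n + 2))" and "p0 = real_of_int (cf_p \<alpha> n)"
    and "p2 = real_of_int (cf_p \<alpha> (n + 2))" and "a = real (cf_a \<alpha> (n + 2))"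
  have q: "q0 \<ge> 1" "q1 \<ge> 1" "q2 \<ge> 1" using cf_q_ge_1[OF cf] by (auto simp: q0_def q1_def q2_def)
  have q2: "q2 = a * q1 + q0"
    by (simp add: q0_def q1_def q2_def a_def cf_q_def numeral_2_eq_2)
  have "p2 * q0 - p0 * q2 = a"
    using arg_cong[OF cf_p_cf_q_det2[of \<alpha> n], of real_of_int] n
    by (simp add: overlap_indices_def p0_def p2_def q0_def q2_def a_def)
  then have "a / (q0 * q2) = p2 / q2 - p0 / q0" using q by (simp add: field_simps)
  then have "a / (q0 * q2) < \<gamma> / q0 powr (\<tau> + 1) + \<gamma> / q2 powr (\<tau> + 1)"
    using n by (simp add: overlap_indices_def p0_def p2_def q0_def q2_def)
  from gap_bound_of_overlap[OF q(1,2) _ q2 \<tau> _ this] \<gamma>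
  have gap: "a * (q0 powr \<tau> - \<gamma> * q1) < 2 * \<gamma> * q0" by (simp add: a_def)
  define k0 k1 where "k0 = nat (cf_q \<alpha> n)" and "k1 = nat (cf_q \<alpha> (n + 1))"
  have k: "real k0 = q0" "real k1 = q1" "k0 \<ge> 1"
    using cf_q_ge_1[OF cf, of n] cf_q_ge_1[OF cf, of "n + 1"] by (auto simp: k0_def k1_def q0_def q1_def)
  have "\<gamma> / q0 powr \<tau> \<le> dist_int (q0 * \<alpha>)"
    using \<alpha> k unfolding Dset_def by auto
  also have "\<dots> \<le> 1 / q1"
    using dist_int_le[of "q0 * \<alpha>" "cf_p \<alpha> n"] cf_approx_error[OF cf, of n]
    by (simp add: q0_def q1_def)
  finally have "\<gamma> * q1 \<le> q0 powr \<tau>" using q by (simp add: field_simps)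
  \<comment> \<open>so the absolute value in the separation bound can be dropped\<close>
  have "c / q0 powr (1 + e) \<le> \<bar>q0 powr \<tau> - \<gamma> * q1\<bar>"
    using avoid k unfolding powers_avoid_multiples_def by metis
  then have "a * (c / q0 powr (1 + e)) \<le> a * (q0 powr \<tau> - \<gamma> * q1)"
    using \<open>\<gamma> * q1 \<le> q0 powr \<tau>\<close> by (intro mult_left_mono) (auto simp: a_def)
  with gap have "a * (c / q0 powr (1 + e)) < 2 * \<gamma> * q0" by linarith
  then have "c * a < 2 * \<gamma> * (q0 * q0 powr (1 + e))" using q by (simp add: field_simps)
  also have "q0 * q0 powr (1 + e) = q0 powr (2 + e)" using q by (simp add: powr_add power2_eq_square)
  finally show ?thesis by (simp add: a_def q0_def)
qed

theorem lemma8: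
  fixes \<tau> :: real
  assumes "\<tau> > 3"
  shows "AE \<gamma> in lborel. \<gamma> \<in> {0<..<1/2} \<longrightarrow>
    (\<forall>\<alpha> \<in> Dset \<gamma> \<tau>.
      let S = {n::nat. even n \<and>
            real_of_int (cf_p \<alpha> n) / real_of_int (cf_q \<alpha> n)
              + \<gamma> / real_of_int (cf_q \<alpha> n) powr (\<tau> + 1)
            > real_of_int (cf_p \<alpha> (n + 2)) / real_of_int (cf_q \<alpha> (n + 2))
              - \<gamma> / real_of_int (cf_q \<alpha> (n + 2)) powr (\<tau> + 1)}
      in infinite S \<longrightarrow>
         (\<forall>\<epsilon>>0. \<exists>C>0. \<forall>n\<in>S.
            real (cf_a \<alpha> (n + 2)) \<le> C * real_of_int (cf_q \<alpha> n) powr (2 + \<epsilon>)))"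
proof -
  have "\<tau> \<ge> 0" using assms by simp
  \<comment> \<open>The bound holds for every index in S.\<close>
  from AE_powers_avoid_multiples[OF this] show ?thesis
    unfolding Let_def overlap_indices_def[symmetric]
  proof (rule eventually_mono, intro impI ballI allI)
    fix \<gamma> \<alpha> \<epsilon> :: real
    assume "0 < \<gamma> \<and> \<gamma> \<le> 1/2 \<longrightarrow> (\<forall>e>0. \<exists>c>0. powers_avoid_multiples \<tau> \<gamma> e c)"
      and \<gamma>: "\<gamma> \<in> {0<..<1/2}" and \<alpha>: "\<alpha> \<in> Dset \<gamma> \<tau>" and "\<epsilon> > 0"
    then obtain c where "c > 0" and avoid: "powers_avoid_multiples \<tau> \<gamma> \<epsilon> c" by auto
    have "real (cf_a \<alpha> (n + 2)) \<le> 1 / c * real_of_int (cf_q \<alpha> n) powr (2 + \<epsilon>)"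
      if "n \<in> overlap_indices \<tau> \<gamma> \<alpha>" for n
    proof -
      have "c * real (cf_a \<alpha> (n + 2)) < 2 * \<gamma> * real_of_int (cf_q \<alpha> n) powr (2 + \<epsilon>)"
        using \<gamma> by (intro cf_a_bound_of_overlap[OF \<open>\<tau> \<ge> 0\<close> _ \<alpha> avoid that]) simp
      also have "\<dots> \<le> real_of_int (cf_q \<alpha> n) powr (2 + \<epsilon>)"
        using \<gamma> by (intro mult_left_le_one_le) auto
      finally show ?thesis using \<open>c > 0\<close> by (simp add: field_simps)
    qed
    with \<open>c > 0\<close> show "\<exists>C>0. \<forall>n\<in>overlap_indices \<tau> \<gamma> \<alpha>.
        real (cf_a \<alpha> (n + 2)) \<le> C * real_of_int (cf_q \<alpha> n) powr (2 + \<epsilon>)"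
      by (intro exI[of _ "1 / c"]) auto
  qed
qed

end
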